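(* Let $X$ be an infinite-dimensional complex separable Hilbert space and $A\in\mathcal B(X)$ with an unconditional basis of eigenvectors $\{\varphi_n\}_{n\ge1}$, $A\varphi_n=-\lambda_n\varphi_n$. Let $b\in X$ and $B:X\to\mathbb C$, $Bx=\langle x,b\rangle$. Then $(A,B)$ is exactly observable on $[0,\infty)$ (equivalently, $\{e^{tA^*}b\}_{t\in[0,\infty)}$ is a semi-continuous frame for $X$) if and only if all of the following hold: (1) $\mathrm{Re}(\lambda_n)>0$ for all $n$; (2) $\mathrm{Re}(\lambda_n)\to0$ as $n\to\infty$; (3) the functions $\mathcal E_n(t)=e^{-\lambda_nt}\langle\varphi_n,b\rangle$, $n\ge1$, form an unconditional sequence in $L^2([0,\infty),\mathbb C)$; (4) there are constants $0<c_1\le c_2<\infty$ with $c_1\le \dfrac{|\langle b,\varphi_n\rangle|}{\|\varphi_n\|\sqrt{2\mathrm{Re}(\lambda_n)}}\le c_2$ for all $n$.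
   Context: $e^{tA}=\sum_n(tA)^n/n!$. $(A,B)$ is exactly observable on $[0,\infty)$ if there are $c_1,c_2>0$ with $c_1\|x\|^2\le\int_0^\infty|\langle e^{tA}x,b\rangle|^2dt\le c_2\|x\|^2$ for all $x\in X$. A sequence $\{\psi_n\}$ is an unconditional sequence if there are $c_1,c_2>0$ with $c_1\sum|a_n|^2\|\psi_n\|^2\le\|\sum a_n\psi_n\|^2\le c_2\sum|a_n|^2\|\psi_n\|^2$ for all finitely supported scalar sequences; an unconditional basis is a complete unconditional sequence. *)

theory Defs
  imports "HOL-Analysis.Analysis"
begin

text \<open>A complex Hilbert space is modelled as a real Banach space type 'a together with
  a complex scalar multiplication sm (extending the real one) and a complex inner
  product ip (linear in the first, conjugate-linear in the second argument) whose
  induced norm is the norm of 'a.\<close>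

definition complex_hilbert :: "(complex \<Rightarrow> 'a::banach \<Rightarrow> 'a) \<Rightarrow> ('a \<Rightarrow> 'a \<Rightarrow> complex) \<Rightarrow> bool" where
  "complex_hilbert sm ip \<longleftrightarrow>
     (\<forall>x. sm 1 x = x) \<and>
     (\<forall>a c x. sm a (sm c x) = sm (a * c) x) \<and>
     (\<forall>a x y. sm a (x + y) = sm a x + sm a y) \<and>
     (\<forall>a c x. sm (a + c) x = sm a x + sm c x) \<and>
     (\<forall>r x. sm (complex_of_real r) x = r *\<^sub>R x) \<and>
     (\<forall>x y z. ip (x + y) z = ip x z + ip y z) \<and>
     (\<forall>a x y. ip (sm a x) y = a * ip x y) \<and>
     (\<forall>x y. ip y x = cnj (ip x y)) \<and>
     (\<forall>x. ip x x = complex_of_real ((norm x)\<^sup>2))"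

definition separable_space :: "'a::metric_space itself \<Rightarrow> bool" where
  "separable_space _ \<longleftrightarrow> (\<exists>D::'a set. countable D \<and> closure D = UNIV)"

definition cspan :: "(complex \<Rightarrow> 'a::banach \<Rightarrow> 'a) \<Rightarrow> 'a set \<Rightarrow> 'a set" where
  "cspan sm S = {y. \<exists>F c. finite F \<and> F \<subseteq> S \<and> y = (\<Sum>v\<in>F. sm (c v) v)}"

definition infinite_dimensional :: "(complex \<Rightarrow> 'a::banach \<Rightarrow> 'a) \<Rightarrow> bool" where
  "infinite_dimensional sm \<longleftrightarrow> \<not> (\<exists>S. finite S \<and> cspan sm S = UNIV)"

definition bounded_cop :: "(complex \<Rightarrow> 'a::banach \<Rightarrow> 'a) \<Rightarrow> ('a \<Rightarrow> 'a) \<Rightarrow> bool" where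
  "bounded_cop sm A \<longleftrightarrow>
     (\<forall>x y. A (x + y) = A x + A y) \<and> (\<forall>c x. A (sm c x) = sm c (A x)) \<and>
     (\<exists>K. \<forall>x. norm (A x) \<le> K * norm x)"

definition expop :: "('a::banach \<Rightarrow> 'a) \<Rightarrow> real \<Rightarrow> 'a \<Rightarrow> 'a" where
  "expop A t x = (\<Sum>n. (t ^ n / fact n) *\<^sub>R (A ^^ n) x)"

definition exactly_observable ::
    "('a::banach \<Rightarrow> 'a \<Rightarrow> complex) \<Rightarrow> ('a \<Rightarrow> 'a) \<Rightarrow> 'a \<Rightarrow> bool" where
  "exactly_observable ip A b \<longleftrightarrow>
     (\<exists>c1 c2. c1 > 0 \<and> c2 > 0 \<and> (\<forall>x.
        ennreal (c1 * (norm x)\<^sup>2) \<le> (\<integral>\<^sup>+ t \<in> {0..}. ennreal ((cmod (ip (expop A t x) b))\<^sup>2) \<partial>lborel) \<and>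
        (\<integral>\<^sup>+ t \<in> {0..}. ennreal ((cmod (ip (expop A t x) b))\<^sup>2) \<partial>lborel) \<le> ennreal (c2 * (norm x)\<^sup>2)))"

definition unconditional_seq :: "(complex \<Rightarrow> 'a::banach \<Rightarrow> 'a) \<Rightarrow> (nat \<Rightarrow> 'a) \<Rightarrow> bool" where
  "unconditional_seq sm \<phi> \<longleftrightarrow>
     (\<exists>c1 c2. c1 > 0 \<and> c2 > 0 \<and> (\<forall>F a. finite F \<longrightarrow>
        c1 * (\<Sum>n\<in>F. (cmod (a n))\<^sup>2 * (norm (\<phi> n))\<^sup>2) \<le> (norm (\<Sum>n\<in>F. sm (a n) (\<phi> n)))\<^sup>2 \<and>
        (norm (\<Sum>n\<in>F. sm (a n) (\<phi> n)))\<^sup>2 \<le> c2 * (\<Sum>n\<in>F. (cmod (a n))\<^sup>2 * (norm (\<phi> n))\<^sup>2)))"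

definition unconditional_basis :: "(complex \<Rightarrow> 'a::banach \<Rightarrow> 'a) \<Rightarrow> (nat \<Rightarrow> 'a) \<Rightarrow> bool" where
  "unconditional_basis sm \<phi> \<longleftrightarrow> unconditional_seq sm \<phi> \<and> closure (cspan sm (range \<phi>)) = UNIV"

definition L2_sq :: "(real \<Rightarrow> complex) \<Rightarrow> ennreal" where
  "L2_sq f = (\<integral>\<^sup>+ t \<in> {0..}. ennreal ((cmod (f t))\<^sup>2) \<partial>lborel)"

definition in_L2 :: "(real \<Rightarrow> complex) \<Rightarrow> bool" where
  "in_L2 f \<longleftrightarrow> f \<in> borel_measurable lborel \<and> L2_sq f < \<infinity>"

definition unconditional_seq_L2 :: "(nat \<Rightarrow> real \<Rightarrow> complex) \<Rightarrow> bool" where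
  "unconditional_seq_L2 E \<longleftrightarrow> (\<forall>n. in_L2 (E n)) \<and>
     (\<exists>c1 c2. c1 > 0 \<and> c2 > 0 \<and> (\<forall>F a. finite F \<longrightarrow>
        c1 * (\<Sum>n\<in>F. (cmod (a n))\<^sup>2 * enn2real (L2_sq (E n)))
          \<le> enn2real (L2_sq (\<lambda>t. \<Sum>n\<in>F. a n * E n t)) \<and>
        enn2real (L2_sq (\<lambda>t. \<Sum>n\<in>F. a n * E n t))
          \<le> c2 * (\<Sum>n\<in>F. (cmod (a n))\<^sup>2 * enn2real (L2_sq (E n)))))"

end

theory Submission
  imports Defs
begin

text \<open>
  Write f \<asymp> g (comparable f g) for two-sided bounds c1 g \<le> f \<le> c2 g with positive
  constants. Exact observability says ||<e^(tA) x, b>||^2 \<asymp> ||x||^2 in L^2[0, \<infinity>). By density of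
  the span of the \<phi> n, continuity of x \<mapsto> <e^(tA) x, b> and Fatou's lemma it suffices to check
  this for finite combinations x = \<Sum> a n \<phi> n, whose output is \<Sum> a n E n with
  E n t = exp (- lam n t) <\<phi> n, b>. The unconditional basis gives ||\<Sum> a n \<phi> n||^2 \<asymp>
  \<Sum> |a n|^2 ||\<phi> n||^2, so, \<asymp> being an equivalence relation, observability holds iff
  ||\<Sum> a n E n||^2 \<asymp> \<Sum> |a n|^2 ||E n||^2 (condition 3) and ||E n||^2 \<asymp> ||\<phi> n||^2. The latter is
  condition 4, as ||E n||^2 = |<\<phi> n, b>|^2 / (2 Re (lam n)), and it forces Re (lam n) > 0, as
  otherwise ||E n|| is 0 or \<infinity>. Condition 2 then comes for free: if Re (lam n) \<ge> \<delta> infinitely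
  often, two such eigenvalues (all bounded by ||A||) are arbitrarily close, and the difference of
  the normalised E i and E j has arbitrarily small norm, violating the lower bound in (3).
\<close>

section \<open>Two-sided bounds\<close>

definition comparable :: "('i \<Rightarrow> real) \<Rightarrow> ('i \<Rightarrow> real) \<Rightarrow> bool" where
  "comparable f g \<longleftrightarrow> (\<exists>c1 c2. 0 < c1 \<and> 0 < c2 \<and> (\<forall>i. c1 * g i \<le> f i \<and> f i \<le> c2 * g i))"

lemma comparableI:
  assumes "0 < c1" "0 < c2" "\<And>i. c1 * g i \<le> f i" "\<And>i. f i \<le> c2 * g i"
  shows "comparable f g"
  using assms unfolding comparable_def by blast

lemma comparable_sym:
  assumes "comparable f g" shows "comparable g f"
proof -
  obtain c1 c2 where c: "0 < c1" "0 < c2" "\<And>i. c1 * g i \<le> f i" "\<And>i. f i \<le> c2 * g i"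
    using assms unfolding comparable_def by blast
  show ?thesis
  proof (rule comparableI[of "1 / c2" "1 / c1"])
    show "1 / c2 * f i \<le> g i" for i using c(2) c(4)[of i] by (simp add: field_simps)
    show "g i \<le> 1 / c1 * f i" for i using c(1) c(3)[of i] by (simp add: field_simps)
  qed (use c in auto)
qed

lemma comparable_trans [trans]:
  assumes "comparable f g" "comparable g h" shows "comparable f h"
proof -
  obtain c1 c2 where c: "0 < c1" "0 < c2" "\<And>i. c1 * g i \<le> f i" "\<And>i. f i \<le> c2 * g i"
    using assms(1) unfolding comparable_def by blast
  obtain d1 d2 where d: "0 < d1" "0 < d2" "\<And>i. d1 * h i \<le> g i" "\<And>i. g i \<le> d2 * h i"
    using assms(2) unfolding comparable_def by blast
  show ?thesis
  proof (rule comparableI[of "c1 * d1" "c2 * d2"])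
    show "c1 * d1 * h i \<le> f i" for i
      using order_trans[OF mult_left_mono[OF d(3)[of i]] c(3)[of i]] c(1) by (simp add: mult.assoc)
    show "f i \<le> c2 * d2 * h i" for i
      using order_trans[OF c(4)[of i] mult_left_mono[OF d(4)[of i]]] c(2) by (simp add: mult.assoc)
  qed (use c d in auto)
qed

lemma comparable_comp: "comparable f g \<Longrightarrow> comparable (f \<circ> h) (g \<circ> h)"
  unfolding comparable_def by auto

lemma comparable_mult_right_iff:
  assumes "\<And>i. w i > 0"
  shows "comparable (\<lambda>i. f i * w i) (\<lambda>i. g i * w i) \<longleftrightarrow> comparable f g"
  using assms unfolding comparable_def by (simp add: mult.assoc[symmetric])

lemma comparable_weighted_sums:
  assumes "comparable f g"
  shows "comparable (\<lambda>(F, a). \<Sum>n\<in>F. (cmod (a n))\<^sup>2 * f n) (\<lambda>(F, a). \<Sum>n\<in>F. (cmod (a n))\<^sup>2 * g n)"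
proof -
  obtain c1 c2 where c: "0 < c1" "0 < c2" "\<And>i. c1 * g i \<le> f i" "\<And>i. f i \<le> c2 * g i"
    using assms unfolding comparable_def by blast
  show ?thesis
  proof (rule comparableI[of c1 c2], goal_cases)
    case (3 i)
    show ?case unfolding case_prod_beta sum_distrib_left
      by (intro sum_mono) (metis c(3) mult.left_commute mult_left_mono zero_le_power2)
  next
    case (4 i)
    show ?case unfolding case_prod_beta sum_distrib_left
      by (intro sum_mono) (metis c(4) mult.left_commute mult_left_mono zero_le_power2)
  qed (use c in auto)
qed

lemma bounded_ratio_iff_comparable:
  fixes r :: "nat \<Rightarrow> real"
  assumes "\<And>n. r n \<ge> 0"
  shows "(\<exists>c1 c2. 0 < c1 \<and> c1 \<le> c2 \<and> (\<forall>n. c1 \<le> r n \<and> r n \<le> c2)) \<longleftrightarrow>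
         comparable (\<lambda>n. (r n)\<^sup>2) (\<lambda>_. 1)"
proof
  assume "\<exists>c1 c2. 0 < c1 \<and> c1 \<le> c2 \<and> (\<forall>n. c1 \<le> r n \<and> r n \<le> c2)"
  then obtain c1 c2 where c: "0 < c1" "c1 \<le> c2" "\<And>n. c1 \<le> r n \<and> r n \<le> c2" by blast
  show "comparable (\<lambda>n. (r n)\<^sup>2) (\<lambda>_. 1)"
  proof (rule comparableI[of "c1\<^sup>2" "c2\<^sup>2"])
    show "c1\<^sup>2 * 1 \<le> (r n)\<^sup>2" "(r n)\<^sup>2 \<le> c2\<^sup>2 * 1" for n
      using c(1) c(3)[of n] by (auto intro: power_mono)
  qed (use c in auto)
next
  assume "comparable (\<lambda>n. (r n)\<^sup>2) (\<lambda>_. 1)"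
  then obtain c1 c2 where c: "0 < c1" "0 < c2" "\<And>n. c1 \<le> (r n)\<^sup>2" "\<And>n. (r n)\<^sup>2 \<le> c2"
    unfolding comparable_def by auto
  have "sqrt c1 \<le> r n" "r n \<le> sqrt c2" for n
    using real_sqrt_le_mono[OF c(3)[of n]] real_sqrt_le_mono[OF c(4)[of n]] assms[of n] by simp_all
  moreover from this have "sqrt c1 \<le> sqrt c2" by (meson order_trans)
  ultimately show "\<exists>c1 c2. 0 < c1 \<and> c1 \<le> c2 \<and> (\<forall>n. c1 \<le> r n \<and> r n \<le> c2)"
    using c(1) by (intro exI[of _ "sqrt c1"] exI[of _ "sqrt c2"]) auto
qed

lemma ennreal_bounds_iff_comparable:
  fixes f :: "'i \<Rightarrow> ennreal"
  assumes "\<And>i. g i \<ge> 0"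
  shows "(\<exists>c1 c2. 0 < c1 \<and> 0 < c2 \<and> (\<forall>i. ennreal (c1 * g i) \<le> f i \<and> f i \<le> ennreal (c2 * g i)))
     \<longleftrightarrow> (\<forall>i. f i < \<infinity>) \<and> comparable (\<lambda>i. enn2real (f i)) g"
proof
  assume "\<exists>c1 c2. 0 < c1 \<and> 0 < c2 \<and> (\<forall>i. ennreal (c1 * g i) \<le> f i \<and> f i \<le> ennreal (c2 * g i))"
  then obtain c1 c2 where c: "0 < c1" "0 < c2" "\<And>i. ennreal (c1 * g i) \<le> f i" "\<And>i. f i \<le> ennreal (c2 * g i)"
    by blast
  have fin: "f i < \<infinity>" for i using c(4)[of i] by (simp add: le_less_trans)
  have "c1 * g i \<le> enn2real (f i) \<and> enn2real (f i) \<le> c2 * g i" for i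
  proof -
    have "f i = ennreal (enn2real (f i))" using fin[of i] by simp
    then show ?thesis
      using c(3,4)[of i] c(1,2) assms[of i] by (metis ennreal_le_iff enn2real_nonneg mult_nonneg_nonneg less_imp_le)
  qed
  with c show "(\<forall>i. f i < \<infinity>) \<and> comparable (\<lambda>i. enn2real (f i)) g"
    using fin by (auto intro: comparableI)
next
  assume "(\<forall>i. f i < \<infinity>) \<and> comparable (\<lambda>i. enn2real (f i)) g"
  then obtain c1 c2 where fin: "\<And>i. f i < \<infinity>" and c: "0 < c1" "0 < c2"
    "\<And>i. c1 * g i \<le> enn2real (f i)" "\<And>i. enn2real (f i) \<le> c2 * g i"
    unfolding comparable_def by blast
  have "f i = ennreal (enn2real (f i))" for i using fin[of i] by simp
  then have "ennreal (c1 * g i) \<le> f i \<and> f i \<le> ennreal (c2 * g i)" for i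
    using c(3,4)[of i] by (metis ennreal_leI)
  with c(1,2) show "\<exists>c1 c2. 0 < c1 \<and> 0 < c2 \<and> (\<forall>i. ennreal (c1 * g i) \<le> f i \<and> f i \<le> ennreal (c2 * g i))"
    by blast
qed

text \<open>Sums over infinite sets are \<open>0\<close>, so the guard \<open>finite F\<close> in the definitions of
  unconditional sequences can be dropped.\<close>

lemma comparable_finite_supports_iff:
  assumes "\<And>F a. infinite F \<Longrightarrow> f F a = 0 \<and> g F a = 0"
  shows "(\<exists>c1 c2. 0 < c1 \<and> 0 < c2 \<and> (\<forall>F a. finite F \<longrightarrow> c1 * g F a \<le> f F a \<and> f F a \<le> c2 * g F a))
    \<longleftrightarrow> comparable (\<lambda>(F, a). f F a) (\<lambda>(F, a). g F a)"
proof -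
  have "(\<forall>F a. finite F \<longrightarrow> c1 * g F a \<le> f F a \<and> f F a \<le> c2 * g F a) \<longleftrightarrow>
      (\<forall>F a. c1 * g F a \<le> f F a \<and> f F a \<le> c2 * g F a)" for c1 c2
    using assms by (metis mult_zero_right order_refl)
  then show ?thesis by (simp only: comparable_def split_paired_All prod.case)
qed

section \<open>Complex Hilbert spaces\<close>

locale complex_hilbert_space =
  fixes sm :: "complex \<Rightarrow> 'a::banach \<Rightarrow> 'a" and ip :: "'a \<Rightarrow> 'a \<Rightarrow> complex"
  assumes hilb: "complex_hilbert sm ip"
begin

lemma sm_one: "sm 1 x = x"
  using hilb unfolding complex_hilbert_def by meson

lemma sm_sm: "sm a (sm c x) = sm (a * c) x"
  using hilb unfolding complex_hilbert_def by meson

lemma sm_add_left: "sm (a + c) x = sm a x + sm c x"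
  using hilb unfolding complex_hilbert_def by meson

lemma sm_of_real: "sm (complex_of_real r) x = r *\<^sub>R x"
  using hilb unfolding complex_hilbert_def by meson

lemma ip_add_left: "ip (x + y) z = ip x z + ip y z"
  using hilb unfolding complex_hilbert_def by meson

lemma ip_sm_left: "ip (sm a x) y = a * ip x y"
  using hilb unfolding complex_hilbert_def by meson

lemma ip_commute: "ip y x = cnj (ip x y)"
  using hilb unfolding complex_hilbert_def by meson

lemma ip_self: "ip x x = complex_of_real ((norm x)\<^sup>2)"
  using hilb unfolding complex_hilbert_def by meson

lemma ip_add_right: "ip z (x + y) = ip z x + ip z y"
  by (subst (1 2 3) ip_commute) (simp add: ip_add_left)

lemma ip_sm_right: "ip x (sm a y) = cnj a * ip x y"
  by (subst (1 2) ip_commute) (simp add: ip_sm_left)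

lemma sm_eq_scaleR: "sm c x = Re c *\<^sub>R x + Im c *\<^sub>R sm \<i> x"
proof -
  have "sm c x = sm (complex_of_real (Re c)) x + sm (complex_of_real (Im c) * \<i>) x"
    by (metis complex_eq mult.commute sm_add_left)
  also have "sm (complex_of_real (Im c) * \<i>) x = sm (complex_of_real (Im c)) (sm \<i> x)"
    by (rule sm_sm[symmetric])
  finally show ?thesis by (simp only: sm_of_real)
qed

lemma bounded_linear_sm_left: "bounded_linear (\<lambda>c. sm c x)"
proof -
  have "(\<lambda>c. sm c x) = (\<lambda>c. Re c *\<^sub>R x + Im c *\<^sub>R sm \<i> x)"
    by (rule ext, rule sm_eq_scaleR)
  moreover have "bounded_linear (\<lambda>c. Re c *\<^sub>R x + Im c *\<^sub>R sm \<i> x)"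
    by (intro bounded_linear_add bounded_linear_compose[OF bounded_linear_scaleR_left]
        bounded_linear_Re bounded_linear_Im)
  ultimately show ?thesis by simp
qed

lemma norm_sm: "norm (sm a x) = cmod a * norm x"
proof -
  have "complex_of_real ((norm (sm a x))\<^sup>2) = a * cnj a * complex_of_real ((norm x)\<^sup>2)"
    by (simp only: ip_self[symmetric] ip_sm_left ip_sm_right mult_ac)
  also have "\<dots> = complex_of_real ((cmod a * norm x)\<^sup>2)"
    by (simp only: complex_norm_square[symmetric] power_mult_distrib of_real_mult)
  finally have "(norm (sm a x))\<^sup>2 = (cmod a * norm x)\<^sup>2"
    using of_real_eq_iff by blast
  then show ?thesis by (simp add: power2_eq_iff_nonneg)
qed

lemma Re_ip_le: "Re (ip x y) \<le> norm x * norm y"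
proof -
  have sq: "(norm (x + s *\<^sub>R y))\<^sup>2 = (norm x)\<^sup>2 + s\<^sup>2 * (norm y)\<^sup>2 + 2 * s * Re (ip x y)" for s
  proof -
    have "ip (x + s *\<^sub>R y) (x + s *\<^sub>R y) = ip x x + s\<^sup>2 * ip y y + s * (ip x y + cnj (ip x y))"
      by (simp add: ip_add_left ip_add_right sm_of_real[symmetric] ip_sm_left ip_sm_right
          ip_commute[of x y] algebra_simps power2_eq_square)
    then have "Re (ip (x + s *\<^sub>R y) (x + s *\<^sub>R y))
        = Re (ip x x) + s\<^sup>2 * Re (ip y y) + 2 * s * Re (ip x y)"
      by simp
    then show ?thesis by (simp only: ip_self Re_complex_of_real)
  qed
  have "(norm (x + y))\<^sup>2 \<le> (norm x + norm y)\<^sup>2"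
    by (simp add: norm_triangle_ineq power_mono)
  moreover have "(norm x - norm y)\<^sup>2 \<le> (norm (x + (-1) *\<^sub>R y))\<^sup>2"
    by (metis abs_le_square_iff abs_norm_cancel norm_triangle_ineq3 scaleR_minus1_left
        diff_conv_add_uminus)
  ultimately show ?thesis using sq[of 1] sq[of "-1"]
    by (simp add: power2_eq_square algebra_simps)
qed

lemma cmod_ip_le: "cmod (ip x y) \<le> norm x * norm y"
proof (cases "ip x y = 0")
  case False
  define u where "u = cnj (ip x y) / complex_of_real (cmod (ip x y))"
  have "cnj (ip x y) * ip x y = complex_of_real ((cmod (ip x y))\<^sup>2)"
    by (metis complex_norm_square mult.commute)
  then have "u * ip x y = complex_of_real (cmod (ip x y))"
    using False by (simp add: u_def power2_eq_square)
  then have "cmod (ip x y) = Re (ip (sm u x) y)" by (simp add: ip_sm_left)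
  also have "\<dots> \<le> norm (sm u x) * norm y" by (rule Re_ip_le)
  finally show ?thesis using False by (simp add: norm_sm u_def norm_divide)
qed simp

lemma bounded_linear_ip_left: "bounded_linear (\<lambda>x. ip x y)"
proof (rule bounded_linear_intro[of _ "norm y"])
  show "ip (r *\<^sub>R x) y = r *\<^sub>R ip x y" for r x
    using ip_sm_left[of "complex_of_real r"] by (simp add: sm_of_real scaleR_conv_of_real)
qed (use ip_add_left cmod_ip_le in auto)

end

section \<open>Exponentials of bounded operators\<close>

lemma norm_funpow_le:
  fixes A :: "'a::real_normed_vector \<Rightarrow> 'a"
  assumes "\<And>x. norm (A x) \<le> K * norm x" "K \<ge> 0"
  shows "norm ((A ^^ n) x) \<le> K ^ n * norm x"
proof (induction n)
  case (Suc n)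
  have "norm ((A ^^ Suc n) x) \<le> K * norm ((A ^^ n) x)" using assms(1)[of "(A ^^ n) x"] by simp
  also have "\<dots> \<le> K * (K ^ n * norm x)" using Suc assms(2) by (rule mult_left_mono)
  finally show ?case by (simp add: mult.assoc)
qed simp

lemma bounded_linear_funpow:
  fixes A :: "'a::real_normed_vector \<Rightarrow> 'a"
  assumes "bounded_linear A"
  shows "bounded_linear (A ^^ n)"
proof (induction n)
  case 0
  show ?case using bounded_linear_ident by (simp add: id_def)
next
  case (Suc n)
  show ?case using bounded_linear_compose[OF assms Suc] by (simp add: o_def)
qed

lemma expop_series_bound:
  assumes "\<And>x. norm (A x) \<le> K * norm x" "K \<ge> 0"
  shows "summable (\<lambda>n. norm ((t ^ n / fact n) *\<^sub>R (A ^^ n) x))"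
    and "norm (expop A t x) \<le> exp (\<bar>t\<bar> * K) * norm x"
proof -
  let ?g = "\<lambda>n. (\<bar>t\<bar> * K) ^ n / fact n * norm x"
  have g: "?g sums (exp (\<bar>t\<bar> * K) * norm x)"
    using sums_mult2[OF exp_converges[of "\<bar>t\<bar> * K"], of "norm x"] by (simp add: divide_inverse mult_ac)
  have le: "norm ((t ^ n / fact n) *\<^sub>R (A ^^ n) x) \<le> ?g n" for n
    using mult_left_mono[OF norm_funpow_le[OF assms, of n x], of "\<bar>t\<bar> ^ n / fact n"]
    by (simp add: power_abs power_mult_distrib mult_ac)
  show sn: "summable (\<lambda>n. norm ((t ^ n / fact n) *\<^sub>R (A ^^ n) x))"
    by (rule summable_comparison_test[OF _ sums_summable[OF g]]) (use le in auto)
  have "norm (expop A t x) \<le> (\<Sum>n. norm ((t ^ n / fact n) *\<^sub>R (A ^^ n) x))"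
    unfolding expop_def by (rule summable_norm[OF sn])
  also have "\<dots> \<le> exp (\<bar>t\<bar> * K) * norm x"
    using suminf_le[OF le sn sums_summable[OF g]] g by (simp add: sums_iff)
  finally show "norm (expop A t x) \<le> exp (\<bar>t\<bar> * K) * norm x" .
qed

lemma bounded_linear_expop:
  assumes "bounded_linear A"
  shows "bounded_linear (expop A t)"
proof -
  obtain K where K: "\<And>x. norm (A x) \<le> K * norm x" "K \<ge> 0"
    using bounded_linear.nonneg_bounded[OF assms] by (metis mult.commute)
  have summ: "summable (\<lambda>n. (t ^ n / fact n) *\<^sub>R (A ^^ n) x)" for x
    by (rule summable_norm_cancel[OF expop_series_bound(1)[OF K]])
  note lin = bounded_linear.linear[OF bounded_linear_funpow[OF assms]]
  show ?thesis
  proof (rule bounded_linear_intro[of _ "exp (\<bar>t\<bar> * K)"])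
    show "expop A t (x + y) = expop A t x + expop A t y" for x y
      unfolding expop_def suminf_add[OF summ summ]
      by (simp add: linear_add[OF lin] scaleR_add_right)
    show "expop A t (r *\<^sub>R x) = r *\<^sub>R expop A t x" for r x
    proof -
      have "(t ^ n / fact n) *\<^sub>R (A ^^ n) (r *\<^sub>R x) = r *\<^sub>R ((t ^ n / fact n) *\<^sub>R (A ^^ n) x)" for n
        by (simp add: linear_scale[OF lin])
      then show ?thesis unfolding expop_def by (simp add: suminf_scaleR_right[OF summ])
    qed
    show "norm (expop A t x) \<le> norm x * exp (\<bar>t\<bar> * K)" for x
      using expop_series_bound(2)[OF K] by (simp add: mult.commute)
  qed
qed

context complex_hilbert_space
begin

lemma bounded_cop_bounded_linear: "bounded_cop sm A \<Longrightarrow> bounded_linear A"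
  unfolding bounded_cop_def
  by (metis bounded_linear_intro mult.commute sm_of_real)

lemma expop_eigenvector:
  assumes comm: "\<And>c x. A (sm c x) = sm c (A x)" and eig: "A v = sm (- l) v"
  shows "expop A t v = sm (exp (- l * complex_of_real t)) v"
proof -
  have pow: "(A ^^ n) v = sm ((- l) ^ n) v" for n
    by (induction n) (simp_all add: sm_one comm eig sm_sm mult.commute)
  have "(\<lambda>n. sm ((- l * complex_of_real t) ^ n /\<^sub>R fact n) v) sums sm (exp (- l * complex_of_real t)) v"
    by (rule bounded_linear.sums[OF bounded_linear_sm_left exp_converges])
  moreover have "sm ((- l * complex_of_real t) ^ n /\<^sub>R fact n) v = (t ^ n / fact n) *\<^sub>R (A ^^ n) v" for n
    unfolding power_mult_distrib[of "- l"] by (simp add: pow sm_sm sm_of_real[symmetric] scaleR_conv_of_real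
        divide_inverse mult_ac)
  ultimately show ?thesis unfolding expop_def by (simp add: sums_iff)
qed

lemma eigenvalue_norm_le:
  assumes "\<And>x. norm (A x) \<le> K * norm x" "A v = sm l v" "v \<noteq> 0"
  shows "cmod l \<le> K"
  using assms(1)[of v] assms(2,3) by (simp add: norm_sm)

end

section \<open>Square integrals on the half-line\<close>

lemma nn_integral_exp_atLeast0:
  assumes "r > 0"
  shows "(\<integral>\<^sup>+ t \<in> {0..}. ennreal (exp (- r * t)) \<partial>lborel) = ennreal (1 / r)"
proof -
  have "((\<lambda>t::real. exp (- r * t)) has_integral 1 / r) {0..}"
    using has_integral_exp_minus_to_infinity[OF assms, of 0] by simp
  then have "((\<lambda>t::real. if t \<in> {0..} then exp (- r * t) else 0) has_integral 1 / r) UNIV"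
    by (subst has_integral_restrict_UNIV)
  then have "integral\<^sup>N lborel (\<lambda>t::real. if t \<in> {0..} then exp (- r * t) else 0) = ennreal (1 / r)"
    by (intro nn_integral_has_integral_lborel) auto
  moreover have "(\<lambda>t::real. ennreal (if t \<in> {0..} then exp (- r * t) else 0)) =
      (\<lambda>t. ennreal (exp (- r * t)) * indicator {0..} t)"
    by (auto simp: indicator_def fun_eq_iff)
  ultimately show ?thesis by simp
qed

lemma emeasure_lborel_atLeast: "emeasure lborel {a::real..} = \<infinity>"
proof (rule ccontr)
  assume "emeasure lborel {a..} \<noteq> \<infinity>"
  then obtain r where r: "emeasure lborel {a..} = ennreal r" "r \<ge> 0"
    by (cases "emeasure lborel {a..}") auto
  have "ennreal (r + 1) = emeasure lborel {a..a + (r + 1)}" using r(2) by simp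
  also have "\<dots> \<le> emeasure lborel {a..}" by (intro emeasure_mono) auto
  finally show False using r by (simp add: ennreal_le_iff)
qed

lemma L2_sq_zero [simp]: "L2_sq (\<lambda>t. 0) = 0"
  by (simp add: L2_sq_def)

lemma cmod_exp_mult_sq:
  "(cmod (exp (- l * complex_of_real t) * p))\<^sup>2 = (cmod p)\<^sup>2 * exp (- (2 * Re l) * t)"
  by (simp add: norm_mult norm_exp_eq_Re power_mult_distrib power2_eq_square exp_add[symmetric] mult_ac)

lemma L2_sq_exp:
  assumes "Re l > 0"
  shows "L2_sq (\<lambda>t. exp (- l * complex_of_real t) * p) = ennreal ((cmod p)\<^sup>2 / (2 * Re l))"
proof -
  have "L2_sq (\<lambda>t. exp (- l * complex_of_real t) * p) =
      (\<integral>\<^sup>+ t. ennreal ((cmod p)\<^sup>2) * (ennreal (exp (- (2 * Re l) * t)) * indicator {0..} t) \<partial>lborel)"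
    unfolding L2_sq_def cmod_exp_mult_sq by (simp add: ennreal_mult mult.assoc)
  also have "\<dots> = ennreal ((cmod p)\<^sup>2) * (\<integral>\<^sup>+ t\<in>{0..}. ennreal (exp (- (2 * Re l) * t)) \<partial>lborel)"
    by (rule nn_integral_cmult) measurable
  also have "(\<integral>\<^sup>+ t\<in>{0..}. ennreal (exp (- (2 * Re l) * t)) \<partial>lborel) = ennreal (1 / (2 * Re l))"
    by (rule nn_integral_exp_atLeast0) (use assms in simp)
  also have "ennreal ((cmod p)\<^sup>2) * ennreal (1 / (2 * Re l)) = ennreal ((cmod p)\<^sup>2 / (2 * Re l))"
    by (subst ennreal_mult[symmetric]) (use assms in simp_all)
  finally show ?thesis .
qed

lemma L2_sq_exp_nonpos:
  assumes "Re l \<le> 0" "p \<noteq> 0"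
  shows "L2_sq (\<lambda>t. exp (- l * complex_of_real t) * p) = \<infinity>"
proof -
  have "\<infinity> = ennreal ((cmod p)\<^sup>2) * emeasure lborel {0::real..}"
    using assms(2) by (simp add: emeasure_lborel_atLeast ennreal_mult_top)
  also have "\<dots> = (\<integral>\<^sup>+ t. ennreal ((cmod p)\<^sup>2) * indicator {0..} (t::real) \<partial>lborel)"
    by (intro nn_integral_cmult_indicator[symmetric]) auto
  also have "\<dots> \<le> L2_sq (\<lambda>t. exp (- l * complex_of_real t) * p)"
    unfolding L2_sq_def
  proof (rule nn_integral_mono)
    fix t :: real
    have "t \<ge> 0 \<Longrightarrow> 1 \<le> exp (- (2 * Re l) * t)"
      using assms(1) by (simp add: mult_nonpos_nonneg)
    then have "t \<ge> 0 \<Longrightarrow> (cmod p)\<^sup>2 \<le> (cmod p)\<^sup>2 * exp (- (2 * Re l) * t)"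
      by (metis mult_left_mono mult.right_neutral zero_le_power2)
    then show "ennreal ((cmod p)\<^sup>2) * indicator {0..} t \<le>
        ennreal ((cmod (exp (- l * complex_of_real t) * p))\<^sup>2) * indicator {0..} t"
      unfolding cmod_exp_mult_sq by (auto simp: indicator_def intro: ennreal_leI)
  qed
  finally show ?thesis by (simp add: top_unique)
qed

lemma in_L2_exp:
  assumes "Re l > 0"
  shows "in_L2 (\<lambda>t. exp (- l * complex_of_real t) * p)"
  using L2_sq_exp[OF assms, of p] unfolding in_L2_def
  by (auto intro!: borel_measurable_continuous_onI continuous_intros)

lemma L2_sq_add_le:
  assumes "f \<in> borel_measurable lborel" "g \<in> borel_measurable lborel"
  shows "L2_sq (\<lambda>t. f t + g t) \<le> 2 * L2_sq f + 2 * L2_sq g"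
proof -
  have "(cmod (u + v))\<^sup>2 \<le> 2 * (cmod u)\<^sup>2 + 2 * (cmod v)\<^sup>2" for u v :: complex
  proof -
    have "(cmod (u + v))\<^sup>2 \<le> (cmod u + cmod v)\<^sup>2" by (simp add: norm_triangle_ineq power_mono)
    also have "\<dots> \<le> 2 * (cmod u)\<^sup>2 + 2 * (cmod v)\<^sup>2"
      using sum_squares_ge_zero[of "cmod u - cmod v" 0] by (simp add: power2_eq_square algebra_simps)
    finally show ?thesis .
  qed
  then have "ennreal ((cmod (f t + g t))\<^sup>2) \<le>
      ennreal (2 * (cmod (f t))\<^sup>2 + 2 * (cmod (g t))\<^sup>2)" for t
    by (rule ennreal_leI)
  also have "ennreal (2 * (cmod (f t))\<^sup>2 + 2 * (cmod (g t))\<^sup>2) =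
      2 * ennreal ((cmod (f t))\<^sup>2) + 2 * ennreal ((cmod (g t))\<^sup>2)" for t
    by (simp add: ennreal_mult')
  finally have pointwise: "ennreal ((cmod (f t + g t))\<^sup>2) \<le>
      2 * ennreal ((cmod (f t))\<^sup>2) + 2 * ennreal ((cmod (g t))\<^sup>2)" for t .
  then have "L2_sq (\<lambda>t. f t + g t) \<le> (\<integral>\<^sup>+ t \<in> {0..}. 2 * ennreal ((cmod (f t))\<^sup>2) +
      2 * ennreal ((cmod (g t))\<^sup>2) \<partial>lborel)"
    unfolding L2_sq_def using pointwise by (intro nn_integral_mono) (simp add: indicator_def)
  also have "\<dots> = 2 * L2_sq f + 2 * L2_sq g"
    unfolding L2_sq_def using assms
    by (simp add: distrib_right mult.assoc nn_integral_add nn_integral_cmult)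
  finally show ?thesis .
qed

lemma in_L2_sum:
  assumes "\<And>n. n \<in> F \<Longrightarrow> in_L2 (f n)"
  shows "in_L2 (\<lambda>t. \<Sum>n\<in>F. f n t)"
  using assms
proof (induction F rule: infinite_finite_induct)
  case (insert n F)
  then have "f n \<in> borel_measurable lborel" "(\<lambda>t. \<Sum>n\<in>F. f n t) \<in> borel_measurable lborel"
    and "L2_sq (f n) < \<infinity>" "L2_sq (\<lambda>t. \<Sum>n\<in>F. f n t) < \<infinity>"
    by (auto simp: in_L2_def)
  with L2_sq_add_le[of "f n" "\<lambda>t. \<Sum>n\<in>F. f n t"] insert.hyps show ?case
    unfolding in_L2_def by (auto simp: ennreal_mult_less_top order.strict_trans1)
qed (simp_all add: in_L2_def)

lemma sq_mult_exp_le: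
  fixes \<delta> t :: real
  assumes "\<delta> > 0" "t \<ge> 0"
  shows "t\<^sup>2 * exp (- \<delta> * t) \<le> 16 / \<delta>\<^sup>2 * exp (- (\<delta> / 2) * t)"
proof -
  have "\<delta> * t / 4 \<le> exp (\<delta> * t / 4)"
    using exp_ge_add_one_self[of "\<delta> * t / 4"] by linarith
  then have "(\<delta> * t / 4)\<^sup>2 \<le> (exp (\<delta> * t / 4))\<^sup>2"
    using assms by (intro power_mono) auto
  also have "\<dots> = exp (\<delta> * t / 2)"
    by (simp add: power2_eq_square exp_add[symmetric])
  finally have "t\<^sup>2 \<le> 16 / \<delta>\<^sup>2 * exp (\<delta> * t / 2)"
    using assms by (simp add: power_divide power_mult_distrib field_simps)
  then have "t\<^sup>2 * exp (- \<delta> * t) \<le> 16 / \<delta>\<^sup>2 * exp (\<delta> * t / 2) * exp (- \<delta> * t)"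
    by (rule mult_right_mono) simp
  also have "\<dots> = 16 / \<delta>\<^sup>2 * exp (- (\<delta> / 2) * t)"
    by (simp add: mult.assoc exp_add[symmetric])
  finally show ?thesis .
qed

lemma norm_exp_diff_sq_le:
  assumes "\<delta> > 0" "Re l1 \<ge> \<delta>" "Re l2 \<ge> \<delta>" "cmod (l1 - l2) \<le> \<delta> / 2" "t \<ge> 0"
  shows "(cmod (exp (- l1 * complex_of_real t) - exp (- l2 * complex_of_real t)))\<^sup>2
          \<le> 16 * (cmod (l1 - l2))\<^sup>2 / \<delta>\<^sup>2 * exp (- (\<delta> / 2) * t)"
proof -
  define z where "z = - (l1 - l2) * complex_of_real t"
  define d where "d = cmod (l1 - l2)"
  have "exp (- l1 * complex_of_real t) - exp (- l2 * complex_of_real t) = exp (- l2 * complex_of_real t) * (exp z - 1)"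
    unfolding z_def by (simp add: algebra_simps exp_add[symmetric])
  moreover have "cmod (exp (- l2 * complex_of_real t)) \<le> exp (- \<delta> * t)"
    using assms by (simp add: norm_exp_eq_Re mult_right_mono)
  moreover have "cmod (exp z - 1) \<le> exp (\<delta> / 2 * t) * (d * t)"
  proof -
    have "cmod (exp z - 1) \<le> exp (cmod z) * cmod z"
      using Taylor_exp_field[of z 0] by simp
    moreover have "cmod z = d * t"
      unfolding z_def d_def using assms by (simp add: norm_mult norm_minus_commute)
    moreover have "d * t \<le> \<delta> / 2 * t"
      unfolding d_def using assms by (intro mult_right_mono) simp_all
    ultimately show ?thesis
      by (metis exp_le_cancel_iff mult_right_mono order.trans norm_ge_zero)
  qed
  ultimately have "cmod (exp (- l1 * complex_of_real t) - exp (- l2 * complex_of_real t))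
      \<le> exp (- \<delta> * t) * (exp (\<delta> / 2 * t) * (d * t))"
    by (simp add: norm_mult mult_mono)
  also have "\<dots> = d * t * exp (- (\<delta> / 2) * t)"
    by (simp add: exp_add[symmetric] algebra_simps)
  finally have "(cmod (exp (- l1 * complex_of_real t) - exp (- l2 * complex_of_real t)))\<^sup>2
      \<le> (d * t * exp (- (\<delta> / 2) * t))\<^sup>2"
    by (metis norm_ge_zero power_mono)
  also have "\<dots> = d\<^sup>2 * (t\<^sup>2 * exp (- \<delta> * t))"
    by (simp add: power_mult_distrib power2_eq_square exp_add[symmetric] algebra_simps)
  also have "\<dots> \<le> d\<^sup>2 * (16 / \<delta>\<^sup>2 * exp (- (\<delta> / 2) * t))"
    using assms by (intro mult_left_mono sq_mult_exp_le) simp_all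
  finally show ?thesis unfolding d_def by (simp add: mult_ac)
qed

lemma L2_sq_exp_diff_le:
  assumes "\<delta> > 0" "Re l1 \<ge> \<delta>" "Re l2 \<ge> \<delta>" "cmod (l1 - l2) \<le> \<delta> / 2"
  shows "L2_sq (\<lambda>t. exp (- l1 * complex_of_real t) - exp (- l2 * complex_of_real t))
          \<le> ennreal (32 * (cmod (l1 - l2))\<^sup>2 / \<delta> ^ 3)"
proof -
  let ?c = "16 * (cmod (l1 - l2))\<^sup>2 / \<delta>\<^sup>2"
  have "L2_sq (\<lambda>t. exp (- l1 * complex_of_real t) - exp (- l2 * complex_of_real t))
        \<le> (\<integral>\<^sup>+ t. ennreal ?c * (ennreal (exp (- (\<delta> / 2) * t)) * indicator {0..} t) \<partial>lborel)"
    unfolding L2_sq_def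
  proof (rule nn_integral_mono)
    fix t :: real
    have "ennreal ?c * ennreal (exp (- (\<delta> / 2) * t)) = ennreal (?c * exp (- (\<delta> / 2) * t))"
      by (rule ennreal_mult[symmetric]) simp_all
    then have "t \<ge> 0 \<Longrightarrow> ennreal ((cmod (exp (- l1 * complex_of_real t) - exp (- l2 * complex_of_real t)))\<^sup>2)
        \<le> ennreal ?c * ennreal (exp (- (\<delta> / 2) * t))"
      by (metis ennreal_leI norm_exp_diff_sq_le[OF assms])
    then show "ennreal ((cmod (exp (- l1 * complex_of_real t) - exp (- l2 * complex_of_real t)))\<^sup>2) * indicator {0..} t
        \<le> ennreal ?c * (ennreal (exp (- (\<delta> / 2) * t)) * indicator {0..} t)"
      by (simp add: indicator_def)
  qed
  also have "\<dots> = ennreal ?c * (\<integral>\<^sup>+ t\<in>{0..}. ennreal (exp (- (\<delta> / 2) * t)) \<partial>lborel)"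
    by (rule nn_integral_cmult) measurable
  also have "(\<integral>\<^sup>+ t\<in>{0..}. ennreal (exp (- (\<delta> / 2) * t)) \<partial>lborel) = ennreal (2 / \<delta>)"
    using nn_integral_exp_atLeast0[of "\<delta> / 2"] assms(1) by simp
  also have "ennreal ?c * ennreal (2 / \<delta>) = ennreal (32 * (cmod (l1 - l2))\<^sup>2 / \<delta> ^ 3)"
    using assms(1) by (simp add: ennreal_mult[symmetric] power2_eq_square power3_eq_cube)
  finally show ?thesis .
qed

section \<open>Unconditional sequences of exponentials\<close>

lemma bounded_infinite_close_pair:
  fixes f :: "nat \<Rightarrow> 'a::heine_borel"
  assumes "bounded (f ` S)" "infinite S" "\<epsilon> > 0"
  obtains i j where "i \<in> S" "j \<in> S" "i \<noteq> j" "dist (f i) (f j) < \<epsilon>"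
proof -
  let ?r = "enumerate S"
  have "bounded (range (f \<circ> ?r))"
    using assms(1) enumerate_in_set[OF assms(2)] by (auto intro: bounded_subset)
  then obtain l s where s: "strict_mono s" "(f \<circ> ?r \<circ> s) \<longlonglongrightarrow> l"
    using bounded_imp_convergent_subsequence by blast
  then obtain M where M: "\<And>m n. m \<ge> M \<Longrightarrow> n \<ge> M \<Longrightarrow> dist ((f \<circ> ?r \<circ> s) m) ((f \<circ> ?r \<circ> s) n) < \<epsilon>"
    using metric_CauchyD[OF LIMSEQ_imp_Cauchy[OF s(2)] assms(3)] by blast
  have "?r (s M) \<noteq> ?r (s (Suc M))"
    using enumerate_mono[OF strict_monoD[OF s(1), of M "Suc M"] assms(2)] by simp
  with M[of M "Suc M"] enumerate_in_set[OF assms(2)] show ?thesis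
    by (intro that) auto
qed

lemma unconditional_seq_L2_iff_comparable:
  "unconditional_seq_L2 E \<longleftrightarrow> (\<forall>n. in_L2 (E n)) \<and>
     comparable (\<lambda>(F, a). enn2real (L2_sq (\<lambda>t. \<Sum>n\<in>F. a n * E n t)))
       (\<lambda>(F, a). \<Sum>n\<in>F. (cmod (a n))\<^sup>2 * enn2real (L2_sq (E n)))"
  unfolding unconditional_seq_L2_def by (subst comparable_finite_supports_iff) simp_all

lemma unconditional_seq_iff_comparable:
  "unconditional_seq sm \<phi> \<longleftrightarrow>
     comparable (\<lambda>(F, a). (norm (\<Sum>n\<in>F. sm (a n) (\<phi> n)))\<^sup>2) (\<lambda>(F, a). \<Sum>n\<in>F. (cmod (a n))\<^sup>2 * (norm (\<phi> n))\<^sup>2)"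
  unfolding unconditional_seq_def by (subst comparable_finite_supports_iff) simp_all

lemma unconditional_exp_separated:
  assumes unc: "unconditional_seq_L2 (\<lambda>n t. exp (- lam n * complex_of_real t) * p n)"
    and pos: "\<And>n. Re (lam n) > 0" and nz: "\<And>n. p n \<noteq> 0"
    and K: "\<And>n. cmod (lam n) \<le> K"
  obtains s where "s > 0" "\<And>i j. i \<noteq> j \<Longrightarrow>
    s \<le> enn2real (L2_sq (\<lambda>t. exp (- lam i * complex_of_real t) - exp (- lam j * complex_of_real t)))"
proof -
  obtain c where c: "c > 0" and lower: "\<And>F a. finite F \<Longrightarrow>
      c * (\<Sum>n\<in>F. (cmod (a n))\<^sup>2 * enn2real (L2_sq (\<lambda>t. exp (- lam n * complex_of_real t) * p n)))
        \<le> enn2real (L2_sq (\<lambda>t. \<Sum>n\<in>F. a n * (exp (- lam n * complex_of_real t) * p n)))"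
    using unc unfolding unconditional_seq_L2_def by blast
  have Re_le: "Re (lam n) \<le> K" for n using K[of n] complex_Re_le_cmod[of "lam n"] by linarith
  have "K > 0" using Re_le[of 0] pos[of 0] by linarith
  show ?thesis
  proof (rule that[of "c / (2 * K)"])
    fix i j :: nat assume "i \<noteq> j"
    define a where "a n = (if n = i then 1 / p i else - 1 / p j)" for n
    have "enn2real (L2_sq (\<lambda>t. exp (- lam i * complex_of_real t) * p i)) = (cmod (p i))\<^sup>2 / (2 * Re (lam i))"
      using L2_sq_exp[OF pos[of i], of "p i"] pos[of i] by simp
    then have "(cmod (a i))\<^sup>2 * enn2real (L2_sq (\<lambda>t. exp (- lam i * complex_of_real t) * p i)) = 1 / (2 * Re (lam i))"
      using nz[of i] by (simp add: a_def norm_divide power_divide)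
    then have "c / (2 * K) \<le> c * ((cmod (a i))\<^sup>2 * enn2real (L2_sq (\<lambda>t. exp (- lam i * complex_of_real t) * p i)))"
      using c pos[of i] Re_le[of i] by (simp add: frac_le)
    also have "\<dots> \<le> c * (\<Sum>n\<in>{i, j}. (cmod (a n))\<^sup>2 * enn2real (L2_sq (\<lambda>t. exp (- lam n * complex_of_real t) * p n)))"
      using c \<open>i \<noteq> j\<close> by (intro mult_left_mono) (simp_all add: sum.insert)
    also have "\<dots> \<le> enn2real (L2_sq (\<lambda>t. exp (- lam i * complex_of_real t) - exp (- lam j * complex_of_real t)))"
      using lower[of "{i, j}" a] \<open>i \<noteq> j\<close> nz[of i] nz[of j] by (simp add: a_def)
    finally show "c / (2 * K) \<le> enn2real (L2_sq (\<lambda>t. exp (- lam i * complex_of_real t) - exp (- lam j * complex_of_real t)))" .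
  qed (use c \<open>K > 0\<close> in simp)
qed

lemma unconditional_exp_Re_ge_finite:
  assumes unc: "unconditional_seq_L2 (\<lambda>n t. exp (- lam n * complex_of_real t) * p n)"
    and pos: "\<And>n. Re (lam n) > 0" and nz: "\<And>n. p n \<noteq> 0"
    and bdd: "bounded (range lam)" and "\<delta> > 0"
  shows "finite {n. \<delta> \<le> Re (lam n)}"
proof (rule ccontr)
  assume inf: "infinite {n. \<delta> \<le> Re (lam n)}"
  obtain K where "\<And>n. cmod (lam n) \<le> K"
    using bdd unfolding bounded_iff by blast
  then obtain s where s: "s > 0" "\<And>i j. i \<noteq> j \<Longrightarrow>
      s \<le> enn2real (L2_sq (\<lambda>t. exp (- lam i * complex_of_real t) - exp (- lam j * complex_of_real t)))"
    using unconditional_exp_separated[OF unc pos nz] by blast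
  define \<epsilon> where "\<epsilon> = min (\<delta> / 2) (sqrt (s * \<delta> ^ 3 / 64))"
  have \<epsilon>: "\<epsilon> > 0" "\<epsilon> \<le> \<delta> / 2" "32 * \<epsilon>\<^sup>2 / \<delta> ^ 3 \<le> s / 2"
  proof -
    have "\<epsilon>\<^sup>2 \<le> (sqrt (s * \<delta> ^ 3 / 64))\<^sup>2"
      unfolding \<epsilon>_def using s \<open>\<delta> > 0\<close> by (intro power_mono) auto
    then show "32 * \<epsilon>\<^sup>2 / \<delta> ^ 3 \<le> s / 2"
      using s \<open>\<delta> > 0\<close> by (simp add: field_simps)
  qed (use s \<open>\<delta> > 0\<close> in \<open>auto simp: \<epsilon>_def\<close>)
  have "bounded (lam ` {n. \<delta> \<le> Re (lam n)})"
    using bdd by (rule bounded_subset) auto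
  then obtain i j where ij: "\<delta> \<le> Re (lam i)" "\<delta> \<le> Re (lam j)" "i \<noteq> j" "dist (lam i) (lam j) < \<epsilon>"
    using bounded_infinite_close_pair[of lam, OF _ inf \<epsilon>(1)] by blast
  have "s \<le> enn2real (L2_sq (\<lambda>t. exp (- lam i * complex_of_real t) - exp (- lam j * complex_of_real t)))"
    by (rule s(2)[OF ij(3)])
  also have "\<dots> \<le> 32 * (cmod (lam i - lam j))\<^sup>2 / \<delta> ^ 3"
    using L2_sq_exp_diff_le[OF \<open>\<delta> > 0\<close> ij(1,2)] ij(4)[unfolded dist_norm] \<epsilon>(2) \<open>\<delta> > 0\<close>
    by (intro enn2real_leI) auto
  also have "\<dots> \<le> 32 * \<epsilon>\<^sup>2 / \<delta> ^ 3"
    using ij(4)[unfolded dist_norm] \<open>\<delta> > 0\<close> by (intro divide_right_mono mult_left_mono power_mono) auto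
  finally show False using \<epsilon>(3) s(1) by linarith
qed

lemma unconditional_exp_Re_tendsto_zero:
  assumes "unconditional_seq_L2 (\<lambda>n t. exp (- lam n * complex_of_real t) * p n)"
    and pos: "\<And>n. Re (lam n) > 0" and "\<And>n. p n \<noteq> 0" and "bounded (range lam)"
  shows "(\<lambda>n. Re (lam n)) \<longlonglongrightarrow> 0"
proof (rule LIMSEQ_I)
  fix r :: real assume "r > 0"
  then obtain m where m: "\<And>n. r \<le> Re (lam n) \<Longrightarrow> n \<le> m"
    using unconditional_exp_Re_ge_finite[OF assms] unfolding finite_nat_set_iff_bounded_le by blast
  have "norm (Re (lam n) - 0) < r" if "n \<ge> Suc m" for n
  proof -
    have "\<not> r \<le> Re (lam n)" using m[of n] that by auto
    then show ?thesis using pos[of n] by auto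
  qed
  then show "\<exists>no. \<forall>n\<ge>no. norm (Re (lam n) - 0) < r" by blast
qed

section \<open>Diagonal systems\<close>

locale diagonal_system = complex_hilbert_space sm ip
  for sm :: "complex \<Rightarrow> 'a::banach \<Rightarrow> 'a" and ip +
  fixes A :: "'a \<Rightarrow> 'a" and \<phi> :: "nat \<Rightarrow> 'a" and lam :: "nat \<Rightarrow> complex" and b :: 'a
  assumes bdd: "bounded_cop sm A" and basis: "unconditional_basis sm \<phi>"
    and eig: "\<And>n. \<phi> n \<noteq> 0 \<and> A (\<phi> n) = sm (- lam n) (\<phi> n)"
begin

definition observation :: "'a \<Rightarrow> real \<Rightarrow> complex" where
  "observation x t = ip (expop A t x) b"

definition mode :: "nat \<Rightarrow> real \<Rightarrow> complex" where
  "mode n t = exp (- lam n * complex_of_real t) * ip (\<phi> n) b"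

abbreviation mode_sum :: "nat set \<Rightarrow> (nat \<Rightarrow> complex) \<Rightarrow> real \<Rightarrow> complex" where
  "mode_sum F a t \<equiv> \<Sum>n\<in>F. a n * mode n t"

definition lincomb :: "nat set \<Rightarrow> (nat \<Rightarrow> complex) \<Rightarrow> 'a" where
  "lincomb F a = (\<Sum>n\<in>F. sm (a n) (\<phi> n))"

lemma exactly_observable_iff_observation:
  "exactly_observable ip A b \<longleftrightarrow> (\<exists>c1 c2. 0 < c1 \<and> 0 < c2 \<and>
     (\<forall>x. ennreal (c1 * (norm x)\<^sup>2) \<le> L2_sq (observation x) \<and> L2_sq (observation x) \<le> ennreal (c2 * (norm x)\<^sup>2)))"
  unfolding exactly_observable_def L2_sq_def observation_def ..

lemma bounded_linear_observation: "bounded_linear (\<lambda>x. observation x t)"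
  unfolding observation_def
  using bounded_linear_compose[OF bounded_linear_ip_left bounded_linear_expop[OF bounded_cop_bounded_linear[OF bdd]]] .

lemma observation_lincomb: "observation (lincomb F a) t = mode_sum F a t"
proof -
  have comm: "A (sm c x) = sm c (A x)" for c x using bdd unfolding bounded_cop_def by blast
  have "observation (sm (a n) (\<phi> n)) t = a n * mode n t" for n
  proof -
    have "A (sm (a n) (\<phi> n)) = sm (- lam n) (sm (a n) (\<phi> n))"
      using eig[of n] by (simp only: comm sm_sm mult.commute)
    then have "observation (sm (a n) (\<phi> n)) t =
        ip (sm (exp (- lam n * complex_of_real t)) (sm (a n) (\<phi> n))) b"
      unfolding observation_def by (simp only: expop_eigenvector[OF comm])
    then show ?thesis by (simp add: ip_sm_left mode_def)
  qed
  moreover have "observation (lincomb F a) t = (\<Sum>n\<in>F. observation (sm (a n) (\<phi> n)) t)"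
    unfolding lincomb_def by (rule linear_sum[OF bounded_linear.linear[OF bounded_linear_observation]])
  ultimately show ?thesis by simp
qed

lemma lincomb_dense:
  obtains x where "\<And>k. x k \<in> range (case_prod lincomb)" "x \<longlonglongrightarrow> y"
proof -
  have "cspan sm (range \<phi>) \<subseteq> range (case_prod lincomb)"
  proof
    fix v assume "v \<in> cspan sm (range \<phi>)"
    then obtain G c where G: "finite G" "G \<subseteq> range \<phi>" "v = (\<Sum>w\<in>G. sm (c w) w)"
      unfolding cspan_def by blast
    obtain F where F: "inj_on \<phi> F" "G = \<phi> ` F"
      using G(2) unfolding subset_image_inj by blast
    have "v = lincomb F (c \<circ> \<phi>)"
      unfolding lincomb_def G(3) F(2) by (simp add: sum.reindex[OF F(1)])
    then show "v \<in> range (case_prod lincomb)" by auto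
  qed
  moreover have "y \<in> closure (cspan sm (range \<phi>))"
    using basis unfolding unconditional_basis_def by simp
  ultimately have "y \<in> closure (range (case_prod lincomb))"
    using closure_mono by blast
  then show ?thesis using that unfolding closure_sequential by blast
qed

lemma observation_measurable: "observation y \<in> borel_measurable borel"
proof -
  obtain x where x: "\<And>k. x k \<in> range (case_prod lincomb)" "x \<longlonglongrightarrow> y"
    using lincomb_dense[where y=y] by blast
  have "observation (x k) \<in> borel_measurable borel" for k
    using x(1)[of k] by (auto simp: observation_lincomb mode_def
        intro!: borel_measurable_continuous_onI continuous_intros)
  moreover have "(\<lambda>k. observation (x k) t) \<longlonglongrightarrow> observation y t" for t
    using bounded_linear.tendsto[OF bounded_linear_observation x(2)] .
  ultimately show ?thesis by (rule borel_measurable_LIMSEQ_metric)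
qed

lemma L2_sq_observation_triangle:
  "L2_sq (observation z) \<le> 2 * L2_sq (observation y) + 2 * L2_sq (observation (z - y))"
proof -
  have "observation z t = observation y t + observation (z - y) t" for t
    using linear_diff[OF bounded_linear.linear[OF bounded_linear_observation], of z y] by simp
  then have "observation z = (\<lambda>t. observation y t + observation (z - y) t)" by blast
  then show ?thesis using L2_sq_add_le observation_measurable by simp
qed

lemma L2_sq_observation_upper_extend:
  assumes "\<And>F a. L2_sq (observation (lincomb F a)) \<le> ennreal (C * (norm (lincomb F a))\<^sup>2)"
  shows "L2_sq (observation y) \<le> ennreal (C * (norm y)\<^sup>2)"
proof -
  obtain x where x: "\<And>k. x k \<in> range (case_prod lincomb)" "x \<longlonglongrightarrow> y"
    using lincomb_dense[where y=y] by blast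
  define u where "u k t = ennreal ((cmod (observation (x k) t))\<^sup>2) * indicator {0..} t" for k t
  have ind: "ennreal (c * indicator S t) = ennreal c * indicator S t" for c and S :: "real set" and t
    by (simp add: indicator_def)
  have "(\<lambda>k. ennreal ((cmod (observation (x k) t))\<^sup>2 * indicator {0..} t)) \<longlonglongrightarrow>
      ennreal ((cmod (observation y t))\<^sup>2 * indicator {0..} t)" for t :: real
    by (intro tendsto_ennrealI tendsto_intros bounded_linear.tendsto[OF bounded_linear_observation x(2)])
  then have "(\<lambda>k. u k t) \<longlonglongrightarrow> ennreal ((cmod (observation y t))\<^sup>2) * indicator {0..} t" for t
    unfolding u_def ind .
  then have "liminf (\<lambda>k. u k t) = ennreal ((cmod (observation y t))\<^sup>2) * indicator {0..} t" for t
    by (intro lim_imp_Liminf) simp_all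
  then have "L2_sq (observation y) = (\<integral>\<^sup>+ t. liminf (\<lambda>k. u k t) \<partial>lborel)"
    unfolding L2_sq_def by simp
  also have "\<dots> \<le> liminf (\<lambda>k. integral\<^sup>N lborel (u k))"
    using observation_measurable by (intro nn_integral_liminf) (simp add: u_def)
  also have "\<dots> \<le> liminf (\<lambda>k. ennreal (C * (norm (x k))\<^sup>2))"
  proof (intro Liminf_mono always_eventually allI)
    fix k
    obtain F a where "x k = lincomb F a" using x(1)[of k] by auto
    then show "integral\<^sup>N lborel (u k) \<le> ennreal (C * (norm (x k))\<^sup>2)"
      using assms[of F a] unfolding u_def L2_sq_def by simp
  qed
  also have "\<dots> = ennreal (C * (norm y)\<^sup>2)"
    by (intro lim_imp_Liminf tendsto_intros x(2)) simp
  finally show ?thesis .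
qed

lemma L2_sq_observation_lower_extend:
  assumes lower: "\<And>F a. ennreal (C1 * (norm (lincomb F a))\<^sup>2) \<le> L2_sq (observation (lincomb F a))"
    and upper: "\<And>z. L2_sq (observation z) \<le> ennreal (C2 * (norm z)\<^sup>2)" and "C2 \<ge> 0"
  shows "ennreal (C1 / 2 * (norm y)\<^sup>2) \<le> L2_sq (observation y)"
proof (cases "L2_sq (observation y)")
  case (real r)
  obtain x where x: "\<And>k. x k \<in> range (case_prod lincomb)" "x \<longlonglongrightarrow> y"
    using lincomb_dense[where y=y] by blast
  have bound: "C1 * (norm (x k))\<^sup>2 \<le> 2 * r + 2 * (C2 * (norm (x k - y))\<^sup>2)" for k
  proof -
    obtain F a where Fa: "x k = lincomb F a" using x(1)[of k] by auto
    have "ennreal (C1 * (norm (x k))\<^sup>2) \<le> 2 * L2_sq (observation y) + 2 * L2_sq (observation (x k - y))"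
      unfolding Fa by (rule order_trans[OF lower L2_sq_observation_triangle])
    also have "\<dots> \<le> 2 * ennreal r + 2 * ennreal (C2 * (norm (x k - y))\<^sup>2)"
      unfolding real by (intro add_left_mono mult_left_mono upper) simp
    also have "\<dots> = ennreal (2 * r + 2 * (C2 * (norm (x k - y))\<^sup>2))"
      using \<open>r \<ge> 0\<close> \<open>C2 \<ge> 0\<close> by (simp add: ennreal_mult')
    finally show ?thesis using \<open>r \<ge> 0\<close> \<open>C2 \<ge> 0\<close> by (subst (asm) ennreal_le_iff) auto
  qed
  have "(\<lambda>k. C1 * (norm (x k))\<^sup>2) \<longlonglongrightarrow> C1 * (norm y)\<^sup>2"
    by (intro tendsto_intros x(2))
  moreover have "(\<lambda>k. 2 * r + 2 * (C2 * (norm (x k - y))\<^sup>2)) \<longlonglongrightarrow> 2 * r + 2 * (C2 * (norm (y - y))\<^sup>2)"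
    by (intro tendsto_intros x(2))
  ultimately have "C1 * (norm y)\<^sup>2 \<le> 2 * r"
    using LIMSEQ_le bound by fastforce
  then show ?thesis using real by (simp add: ennreal_leI)
qed simp

theorem exactly_observable_iff_lincomb:
  "exactly_observable ip A b \<longleftrightarrow> (\<exists>c1 c2. 0 < c1 \<and> 0 < c2 \<and> (\<forall>F a.
     ennreal (c1 * (norm (lincomb F a))\<^sup>2) \<le> L2_sq (observation (lincomb F a)) \<and>
     L2_sq (observation (lincomb F a)) \<le> ennreal (c2 * (norm (lincomb F a))\<^sup>2)))"
    (is "_ \<longleftrightarrow> ?span")
proof
  assume ?span
  then obtain c1 c2 where c: "0 < c1" "0 < c2"
    and lower: "\<And>F a. ennreal (c1 * (norm (lincomb F a))\<^sup>2) \<le> L2_sq (observation (lincomb F a))"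
    and upper: "\<And>F a. L2_sq (observation (lincomb F a)) \<le> ennreal (c2 * (norm (lincomb F a))\<^sup>2)"
    by blast
  have upper_all: "L2_sq (observation y) \<le> ennreal (c2 * (norm y)\<^sup>2)" for y
    using L2_sq_observation_upper_extend[OF upper] .
  have "ennreal (c1 / 2 * (norm y)\<^sup>2) \<le> L2_sq (observation y)" for y
    by (rule L2_sq_observation_lower_extend[OF lower upper_all]) (use c in simp)
  with upper_all c show "exactly_observable ip A b"
    unfolding exactly_observable_iff_observation by (intro exI[of _ "c1 / 2"] exI[of _ c2]) simp
next
  assume "exactly_observable ip A b"
  then show ?span unfolding exactly_observable_iff_observation by blast
qed

definition ratio :: "nat \<Rightarrow> real" where
  "ratio n = cmod (ip b (\<phi> n)) / (norm (\<phi> n) * sqrt (2 * Re (lam n)))"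

lemma exactly_observable_iff_comparable:
  "exactly_observable ip A b \<longleftrightarrow> (\<forall>F a. L2_sq (mode_sum F a) < \<infinity>) \<and>
     comparable (\<lambda>(F, a). enn2real (L2_sq (mode_sum F a))) (\<lambda>(F, a). (norm (lincomb F a))\<^sup>2)"
proof -
  define N where "N = (\<lambda>(F, a). (norm (lincomb F a))\<^sup>2)"
  define L where "L = (\<lambda>(F, a). L2_sq (mode_sum F a))"
  have "exactly_observable ip A b \<longleftrightarrow>
      (\<exists>c1 c2. 0 < c1 \<and> 0 < c2 \<and> (\<forall>i. ennreal (c1 * N i) \<le> L i \<and> L i \<le> ennreal (c2 * N i)))"
    unfolding exactly_observable_iff_lincomb observation_lincomb[abs_def] N_def L_def
      split_paired_All prod.case ..
  also have "\<dots> \<longleftrightarrow> (\<forall>i. L i < \<infinity>) \<and> comparable (\<lambda>i. enn2real (L i)) N"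
    by (rule ennreal_bounds_iff_comparable) (simp add: N_def split_beta)
  finally show ?thesis
    unfolding N_def L_def by (simp add: split_paired_All case_prod_unfold)
qed

lemma lincomb_comparable:
  "comparable (\<lambda>(F, a). (norm (lincomb F a))\<^sup>2) (\<lambda>(F, a). \<Sum>n\<in>F. (cmod (a n))\<^sup>2 * (norm (\<phi> n))\<^sup>2)"
  using basis unfolding unconditional_basis_def unconditional_seq_iff_comparable lincomb_def by blast

lemma L2_sq_mode:
  assumes "Re (lam n) > 0"
  shows "L2_sq (mode n) = ennreal ((cmod (ip (\<phi> n) b))\<^sup>2 / (2 * Re (lam n)))"
  unfolding mode_def[abs_def] by (rule L2_sq_exp[OF assms])

lemma ratio_sq:
  assumes "Re (lam n) > 0"
  shows "(ratio n)\<^sup>2 * (norm (\<phi> n))\<^sup>2 = enn2real (L2_sq (mode n))"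
proof -
  have "cmod (ip b (\<phi> n)) = cmod (ip (\<phi> n) b)" by (subst ip_commute) simp
  then show ?thesis
    using assms eig[of n] unfolding L2_sq_mode[OF assms] ratio_def
    by (simp add: power_divide power_mult_distrib field_simps)
qed

lemma ratio_bounds_iff_comparable:
  assumes "\<And>n. Re (lam n) > 0"
  shows "(\<exists>c1 c2. 0 < c1 \<and> c1 \<le> c2 \<and> (\<forall>n. c1 \<le> ratio n \<and> ratio n \<le> c2)) \<longleftrightarrow>
    comparable (\<lambda>n. enn2real (L2_sq (mode n))) (\<lambda>n. (norm (\<phi> n))\<^sup>2)"
proof -
  have "ratio n \<ge> 0" for n using assms[of n] by (simp add: ratio_def)
  then have "(\<exists>c1 c2. 0 < c1 \<and> c1 \<le> c2 \<and> (\<forall>n. c1 \<le> ratio n \<and> ratio n \<le> c2)) \<longleftrightarrow>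
      comparable (\<lambda>n. (ratio n)\<^sup>2) (\<lambda>_. 1)"
    by (rule bounded_ratio_iff_comparable)
  also have "\<dots> \<longleftrightarrow> comparable (\<lambda>n. (ratio n)\<^sup>2 * (norm (\<phi> n))\<^sup>2) (\<lambda>n. 1 * (norm (\<phi> n))\<^sup>2)"
    by (rule comparable_mult_right_iff[symmetric]) (use eig in simp)
  finally show ?thesis using assms by (simp add: ratio_sq)
qed

lemma L2_sq_mode_pos:
  assumes "comparable (\<lambda>n. enn2real (L2_sq (mode n))) (\<lambda>n. (norm (\<phi> n))\<^sup>2)"
  shows "enn2real (L2_sq (mode n)) > 0"
proof -
  obtain c where "c > 0" "\<And>n. c * (norm (\<phi> n))\<^sup>2 \<le> enn2real (L2_sq (mode n))"
    using assms unfolding comparable_def by blast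
  then show ?thesis using eig[of n] by (smt (verit) mult_pos_pos zero_less_power2 norm_eq_zero)
qed

lemma mode_coeff_nonzero_and_Re_pos:
  assumes "comparable (\<lambda>n. enn2real (L2_sq (mode n))) (\<lambda>n. (norm (\<phi> n))\<^sup>2)"
  shows "ip (\<phi> n) b \<noteq> 0" and "Re (lam n) > 0"
proof -
  have pos: "enn2real (L2_sq (mode n)) > 0" by (rule L2_sq_mode_pos[OF assms])
  then show nz: "ip (\<phi> n) b \<noteq> 0"
    by (auto simp: mode_def[abs_def])
  show "Re (lam n) > 0"
  proof (rule ccontr)
    assume "\<not> Re (lam n) > 0"
    then have "L2_sq (mode n) = \<infinity>"
      unfolding mode_def[abs_def] using nz by (intro L2_sq_exp_nonpos) auto
    with pos show False by simp
  qed
qed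

lemma Re_lam_tendsto_zero:
  assumes "\<And>n. Re (lam n) > 0" "unconditional_seq_L2 mode" "\<And>n. ip (\<phi> n) b \<noteq> 0"
  shows "(\<lambda>n. Re (lam n)) \<longlonglongrightarrow> 0"
proof (rule unconditional_exp_Re_tendsto_zero)
  obtain K where K: "\<And>x. norm (A x) \<le> K * norm x"
    using bdd unfolding bounded_cop_def by blast
  have "cmod (- lam n) \<le> K" for n
    using eigenvalue_norm_le[OF K] eig[of n] by blast
  then show "bounded (range lam)"
    unfolding bounded_iff by auto
qed (use assms in \<open>simp_all add: mode_def[abs_def]\<close>)

lemma conditions_imp_comparable:
  assumes pos: "\<And>n. Re (lam n) > 0" and unc: "unconditional_seq_L2 mode"
    and single: "comparable (\<lambda>n. enn2real (L2_sq (mode n))) (\<lambda>n. (norm (\<phi> n))\<^sup>2)"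
  shows "(\<forall>F a. L2_sq (mode_sum F a) < \<infinity>) \<and>
     comparable (\<lambda>(F, a). enn2real (L2_sq (mode_sum F a))) (\<lambda>(F, a). (norm (lincomb F a))\<^sup>2)"
proof
  show "\<forall>F a. L2_sq (mode_sum F a) < \<infinity>"
  proof (intro allI)
    fix F a
    have "in_L2 (\<lambda>t. a n * mode n t)" for n
      using in_L2_exp[OF pos[of n], of "a n * ip (\<phi> n) b"] by (simp add: mode_def mult_ac)
    then show "L2_sq (mode_sum F a) < \<infinity>"
      using in_L2_sum[of F "\<lambda>n t. a n * mode n t"] unfolding in_L2_def by blast
  qed
  have "comparable (\<lambda>(F, a). enn2real (L2_sq (mode_sum F a)))
      (\<lambda>(F, a). \<Sum>n\<in>F. (cmod (a n))\<^sup>2 * enn2real (L2_sq (mode n)))"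
    using unc unfolding unconditional_seq_L2_iff_comparable by blast
  also have "comparable \<dots> (\<lambda>(F, a). \<Sum>n\<in>F. (cmod (a n))\<^sup>2 * (norm (\<phi> n))\<^sup>2)"
    by (rule comparable_weighted_sums[OF single])
  also have "comparable \<dots> (\<lambda>(F, a). (norm (lincomb F a))\<^sup>2)"
    by (rule comparable_sym[OF lincomb_comparable])
  finally show "comparable (\<lambda>(F, a). enn2real (L2_sq (mode_sum F a))) (\<lambda>(F, a). (norm (lincomb F a))\<^sup>2)" .
qed

lemma comparable_imp_conditions:
  assumes cmp: "comparable (\<lambda>(F, a). enn2real (L2_sq (mode_sum F a))) (\<lambda>(F, a). (norm (lincomb F a))\<^sup>2)"
  shows "(\<forall>n. Re (lam n) > 0) \<and> unconditional_seq_L2 mode \<and>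
    comparable (\<lambda>n. enn2real (L2_sq (mode n))) (\<lambda>n. (norm (\<phi> n))\<^sup>2)"
proof (intro conjI allI)
  show single: "comparable (\<lambda>n. enn2real (L2_sq (mode n))) (\<lambda>n. (norm (\<phi> n))\<^sup>2)"
    using comparable_comp[OF cmp, of "\<lambda>n. ({n}, \<lambda>_. 1)"] by (simp add: o_def lincomb_def sm_one)
  show pos: "Re (lam n) > 0" for n
    by (rule mode_coeff_nonzero_and_Re_pos(2)[OF single])
  have "comparable (\<lambda>(F, a). enn2real (L2_sq (mode_sum F a))) (\<lambda>(F, a). (norm (lincomb F a))\<^sup>2)"
    by (rule cmp)
  also have "comparable \<dots> (\<lambda>(F, a). \<Sum>n\<in>F. (cmod (a n))\<^sup>2 * (norm (\<phi> n))\<^sup>2)"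
    by (rule lincomb_comparable)
  also have "comparable \<dots> (\<lambda>(F, a). \<Sum>n\<in>F. (cmod (a n))\<^sup>2 * enn2real (L2_sq (mode n)))"
    by (rule comparable_weighted_sums[OF comparable_sym[OF single]])
  finally show "unconditional_seq_L2 mode"
    unfolding unconditional_seq_L2_iff_comparable
    using in_L2_exp[OF pos] by (simp add: mode_def[abs_def])
qed

theorem exactly_observable_iff_conditions:
  "exactly_observable ip A b \<longleftrightarrow>
     (\<forall>n. Re (lam n) > 0) \<and> (\<lambda>n. Re (lam n)) \<longlonglongrightarrow> 0 \<and> unconditional_seq_L2 mode \<and>
     (\<exists>c1 c2. 0 < c1 \<and> c1 \<le> c2 \<and> (\<forall>n. c1 \<le> ratio n \<and> ratio n \<le> c2))"
proof -
  have "exactly_observable ip A b \<longleftrightarrow> (\<forall>n. Re (lam n) > 0) \<and> unconditional_seq_L2 mode \<and>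
      comparable (\<lambda>n. enn2real (L2_sq (mode n))) (\<lambda>n. (norm (\<phi> n))\<^sup>2)"
    using conditions_imp_comparable comparable_imp_conditions
    unfolding exactly_observable_iff_comparable by blast
  then show ?thesis
    using ratio_bounds_iff_comparable Re_lam_tendsto_zero mode_coeff_nonzero_and_Re_pos(1) by blast
qed

end

theorem theorem3p15:
  fixes sm :: "complex \<Rightarrow> 'a::banach \<Rightarrow> 'a"
    and ip :: "'a \<Rightarrow> 'a \<Rightarrow> complex"
    and A :: "'a \<Rightarrow> 'a" and \<phi> :: "nat \<Rightarrow> 'a" and lam :: "nat \<Rightarrow> complex" and b :: 'a
  assumes hilb: "complex_hilbert sm ip"
    and sep: "separable_space TYPE('a)"
    and infdim: "infinite_dimensional sm"
    and bdd: "bounded_cop sm A"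
    and basis: "unconditional_basis sm \<phi>"
    and eig: "\<And>n. \<phi> n \<noteq> 0 \<and> A (\<phi> n) = sm (- lam n) (\<phi> n)"
  shows "exactly_observable ip A b \<longleftrightarrow>
     (\<forall>n. Re (lam n) > 0) \<and>
     (\<lambda>n. Re (lam n)) \<longlonglongrightarrow> 0 \<and>
     unconditional_seq_L2 (\<lambda>n t. exp (- lam n * complex_of_real t) * ip (\<phi> n) b) \<and>
     (\<exists>c1 c2. 0 < c1 \<and> c1 \<le> c2 \<and> (\<forall>n.
        c1 \<le> cmod (ip b (\<phi> n)) / (norm (\<phi> n) * sqrt (2 * Re (lam n))) \<and>
        cmod (ip b (\<phi> n)) / (norm (\<phi> n) * sqrt (2 * Re (lam n))) \<le> c2))"
proof -
  interpret diagonal_system sm ip A \<phi> lam b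
    using hilb bdd basis eig by unfold_locales auto
  show ?thesis
    using exactly_observable_iff_conditions unfolding mode_def[abs_def] ratio_def .
qed

end
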